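(* Consider the setting in the context with $P_i=\tau_iI_n$, $Q_i=\zeta_iI_n$ ($\tau_i,\zeta_i>0$), $\rho>0$, and assume (P1) admits a KKT point. If there exist $\gamma\in(0,2)$ and $\epsilon_i\in(0,1)$, $i\in\mathcal{V}$, such that $$\tau_i>\rho\Big(\frac1{\epsilon_i}-1\Big)d_i,\qquad \zeta_i>\frac{C_i}{m}(C_i+m),\qquad \sum_{i}\epsilon_i<2-\gamma,$$ then the sequence $\bm{u}^k=(\check{\bm{W}}^k,\hat{\bm{W}}^k,\lambda^k)$ generated by the algorithm (with step parameter $\gamma$) converges to an optimal primal–dual (KKT) solution $\bm{u}^*$ of (P1).
   Context: Let $\mathcal{G}=(\mathcal{V},\mathcal{E})$ be a connected undirected graph with $\mathcal{V}=\{1,\dots,N\}$, $N\ge 2$, and let $d_i$ be the degree of $i$. Variables are $\check{\bm{w}}_i,\hat{\bm{w}}_i\in\mathbb{R}^n$; write $\check{\bm{W}}=(\check{\bm{w}}_1,\dots,\check{\bm{w}}_N)$, $\hat{\bm{W}}$ likewise, $\bm{z}_i=(\check{\bm{w}}_i,\hat{\bm{w}}_i)$, $\bm{Z}=(\check{\bm{W}},\hat{\bm{W}})$. The matrix $\bm{A}\in\mathbb{R}^{|\mathcal{E}|n\times Nn}$ has one block row per edge $\{i,j\}$ ($i<j$) with $I_n$ in block column $i$, $-I_n$ in block column $j$, zeros elsewhere; $A_i$ is its $i$-th block column, so $\bm{A}\check{\bm{W}}=\sum_iA_i\check{\bm{w}}_i$ and $A_i^TA_i=d_iI_n$. Each $f_i:\mathbb{R}^n\times\mathbb{R}^n\to\mathbb{R}$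 is differentiable, jointly convex, with $\nabla f_i$ Lipschitz with constant $C_i$. Let $\mu_1\ge0$, $\mu_2>0$, $F_i(\bm{z}_i)=f_i(\check{\bm{w}}_i,\hat{\bm{w}}_i)+\frac{\mu_1}{2}\|\check{\bm{w}}_i\|^2+\frac{\mu_2}{2}\|\hat{\bm{w}}_i\|^2$, $\bm{F}(\bm{Z})=\sum_iF_i(\bm{z}_i)$, and let $m$ be a constant with $0<m\le\mu_2$. Problem (P1): minimize $\bm{F}(\bm{Z})$ s.t. $\bm{A}\check{\bm{W}}=0$; a KKT point is $(\check{\bm{W}}^*,\hat{\bm{W}}^*,\lambda^* )$ with $\bm{A}\check{\bm{W}}^*=0$, $A_i^T\lambda^*=\nabla_{\check{\bm{w}}_i}F_i(\bm{z}_i^* )$, $\nabla_{\hat{\bm{w}}_i}F_i(\bm{z}_i^* )=0$. Algorithm: with $\mathcal{L}_\rho=\bm{F}(\bm{Z})-\lambda^T\bm{A}\check{\bm{W}}+\frac\rho2\|\bm{A}\check{\bm{W}}\|^2$, from arbitrary $\check{\bm{W}}^0,\hat{\bm{W}}^0,\lambda^0$, for $k=0,1,\dots$: (i) for all $i$ in parallel $\check{\bm{w}}_i^{k+1}=\arg\min_{\check{\bm{w}}_i}\mathcal{L}_\rho(\check{\bm{w}}_i,\check{\bm{W}}^k_{-i},\hat{\bm{W}}^k,\lambda^k)+\frac12\|\check{\bm{w}}_i-\check{\bm{w}}_i^k\|^2_{P_i}$ (other blocks held at iteration $k$); (ii) $\lambda^{k+1}=\lambda^k-\gamma\rho\bm{A}\check{\bm{W}}^{k+1}$;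 (iii) for all $i$ in parallel $\hat{\bm{w}}_i^{k+1}=\arg\min_{\hat{\bm{w}}_i}F_i(\check{\bm{w}}_i^{k+1},\hat{\bm{w}}_i)+\frac12\|\hat{\bm{w}}_i-\hat{\bm{w}}_i^k\|^2_{Q_i}$. Here $\|x\|^2_S=x^TSx$. *)

theory Defs
  imports "HOL-Analysis.Analysis"
begin

(* Vertices are 0..<N (the paper's 1..N shifted); an edge {i,j} with i<j is the pair (i,j). *)
definition edge_set :: "nat \<Rightarrow> (nat \<times> nat) set \<Rightarrow> bool" where
  "edge_set N E \<longleftrightarrow> E \<subseteq> {(i,j). i < j \<and> j < N}"

definition connected_graph :: "nat \<Rightarrow> (nat \<times> nat) set \<Rightarrow> bool" where
  "connected_graph N E \<longleftrightarrow> (\<forall>i<N. \<forall>j<N. (i,j) \<in> (E \<union> E\<inverse>)\<^sup>*)"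

definition deg :: "(nat \<times> nat) set \<Rightarrow> nat \<Rightarrow> nat" where
  "deg E i = card {e\<in>E. fst e = i \<or> snd e = i}"

definition Fi :: "(nat \<Rightarrow> 'a::euclidean_space \<times> 'a \<Rightarrow> real) \<Rightarrow> real \<Rightarrow> real \<Rightarrow> nat \<Rightarrow> 'a \<times> 'a \<Rightarrow> real" where
  "Fi f mu1 mu2 i z = f i z + mu1 / 2 * (norm (fst z))\<^sup>2 + mu2 / 2 * (norm (snd z))\<^sup>2"

(* block row of A W for edge e=(i,j): w_i - w_j *)
definition Aw :: "(nat \<Rightarrow> 'a::real_vector) \<Rightarrow> nat \<times> nat \<Rightarrow> 'a" where
  "Aw W e = W (fst e) - W (snd e)"

definition ATlam :: "(nat \<times> nat) set \<Rightarrow> (nat \<times> nat \<Rightarrow> 'a::real_vector) \<Rightarrow> nat \<Rightarrow> 'a" where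
  "ATlam E lam i = (\<Sum>e\<in>{e\<in>E. fst e = i}. lam e) - (\<Sum>e\<in>{e\<in>E. snd e = i}. lam e)"

definition Lrho :: "nat \<Rightarrow> (nat \<times> nat) set \<Rightarrow> (nat \<Rightarrow> 'a::euclidean_space \<times> 'a \<Rightarrow> real) \<Rightarrow> real \<Rightarrow> real \<Rightarrow> real
    \<Rightarrow> (nat \<Rightarrow> 'a) \<Rightarrow> (nat \<Rightarrow> 'a) \<Rightarrow> (nat \<times> nat \<Rightarrow> 'a) \<Rightarrow> real" where
  "Lrho N E f mu1 mu2 rho Wc Wh lam =
     (\<Sum>i<N. Fi f mu1 mu2 i (Wc i, Wh i)) - (\<Sum>e\<in>E. lam e \<bullet> Aw Wc e)
     + rho / 2 * (\<Sum>e\<in>E. (norm (Aw Wc e))\<^sup>2)"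

definition KKT :: "nat \<Rightarrow> (nat \<times> nat) set \<Rightarrow> (nat \<Rightarrow> 'a::euclidean_space \<times> 'a \<Rightarrow> real) \<Rightarrow> real \<Rightarrow> real
    \<Rightarrow> (nat \<Rightarrow> 'a) \<Rightarrow> (nat \<Rightarrow> 'a) \<Rightarrow> (nat \<times> nat \<Rightarrow> 'a) \<Rightarrow> bool" where
  "KKT N E f mu1 mu2 Wc Wh lam \<longleftrightarrow>
     (\<forall>e\<in>E. Aw Wc e = 0) \<and>
     (\<forall>i<N. GDERIV (Fi f mu1 mu2 i) (Wc i, Wh i) :> (ATlam E lam i, 0))"

end

theory Submission
  imports Defs
begin

text \<open>
  Fix a KKT point \<open>(xs, ys, ls)\<close> and let \<open>V k\<close> be the weighted squared distance of the
  iterate \<open>(Wc k, Wh k, lam k)\<close> to it.  Comparing the optimality conditions of the two proximal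
  block updates with the KKT conditions gives \<open>V (k + 1) + D k \<le> V k\<close>, where \<open>D k\<close> combines
  the squared increments of \<open>Wh\<close> and \<open>Wc\<close> with the squared residual \<open>A Wc (k + 1)\<close>.  The
  local blocks are controlled by cocoercivity of the gradients (Baillon--Haddad) and \<open>m \<le> mu2\<close>,
  the Jacobi coupling of the consensus blocks by Young's inequality with weights \<open>eps i\<close>; the
  bounds on \<open>tau\<close>, \<open>zeta\<close> and \<open>\<Sum>i. eps i\<close> make every coefficient of \<open>D k\<close> positive.
  Hence \<open>D\<close> is summable, increments and residual vanish, the bounded iterates have only KKT
  points as cluster points, and Opial's argument gives convergence of the whole sequence.
\<close>

section \<open>Gradient calculus\<close>

lemma GDERIV_inner_const: "GDERIV (\<lambda>x. inner a x) x :> a"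
  unfolding gderiv_def
  by (rule has_derivative_eq_rhs, (rule derivative_intros)+) (auto simp: inner_commute fun_eq_iff)

lemma GDERIV_cmult: "GDERIV f x :> d \<Longrightarrow> GDERIV (\<lambda>x. c * f x) x :> c *\<^sub>R d"
  unfolding gderiv_def by (drule has_derivative_mult_right[of _ _ _ c]) simp

lemma GDERIV_norm_diff_sq: "GDERIV (\<lambda>w. (norm (w - a))\<^sup>2) w :> 2 *\<^sub>R (w - a)"
proof -
  have "((\<lambda>w. w - a) has_derivative (\<lambda>h. h)) (at w)"
    by (auto intro!: derivative_eq_intros)
  from has_derivative_compose[OF this has_derivative_sqnorm_at] show ?thesis
    unfolding gderiv_def by (simp add: inner_commute)
qed

lemma GDERIV_unique:
  assumes "GDERIV f x :> D" and "GDERIV f x :> D'"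
  shows "D = D'"
proof -
  have "(\<lambda>h. inner h D) = (\<lambda>h. inner h D')"
    using has_derivative_unique assms unfolding gderiv_def by blast
  then have "inner (D - D') D = inner (D - D') D'"
    by metis
  then have "inner (D - D') (D - D') = 0"
    by (simp add: inner_diff_right)
  then show ?thesis
    by simp
qed

lemma GDERIV_minimum_eq_0:
  fixes \<phi> :: "'b::real_inner \<Rightarrow> real"
  assumes "GDERIV \<phi> x :> D" and "\<And>w. \<phi> x \<le> \<phi> w"
  shows "D = 0"
proof -
  have "(\<lambda>h. inner h D) = (\<lambda>h. 0)"
    by (rule has_derivative_local_min[OF assms(1)[unfolded gderiv_def]]) (use assms(2) in auto)
  then have "inner D D = 0"
    by metis
  then show ?thesis
    by simp
qed

lemma GDERIV_partial_fst:
  assumes "GDERIV F (x, y) :> D"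
  shows "GDERIV (\<lambda>x. F (x, y)) x :> fst D"
proof -
  have "((\<lambda>x. (x, y)) has_derivative (\<lambda>h. (h, 0))) (at x)"
    by (auto intro!: derivative_eq_intros)
  from has_derivative_compose[OF this assms[unfolded gderiv_def]] show ?thesis
    unfolding gderiv_def by (simp add: inner_prod_def)
qed

lemma GDERIV_partial_snd:
  assumes "GDERIV F (x, y) :> D"
  shows "GDERIV (\<lambda>y. F (x, y)) y :> snd D"
proof -
  have "((\<lambda>y. (x, y)) has_derivative (\<lambda>h. (0, h))) (at y)"
    by (auto intro!: derivative_eq_intros)
  from has_derivative_compose[OF this assms[unfolded gderiv_def]] show ?thesis
    unfolding gderiv_def by (simp add: inner_prod_def)
qed

section \<open>Convex functions with Lipschitz gradient\<close>

lemma convex_gderiv_above_tangent: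
  fixes f :: "'b::real_inner \<Rightarrow> real"
  assumes cvx: "convex_on UNIV f" and grad: "GDERIV f x :> g"
  shows "f x + inner g (y - x) \<le> f y"
proof -
  define h where "h t = f (x + t *\<^sub>R (y - x))" for t :: real
  have "convex_on UNIV h"
  proof (rule convex_onI)
    fix a t u :: real assume a: "0 < a" "a < 1"
    have "x + ((1 - a) *\<^sub>R t + a *\<^sub>R u) *\<^sub>R (y - x)
        = (1 - a) *\<^sub>R (x + t *\<^sub>R (y - x)) + a *\<^sub>R (x + u *\<^sub>R (y - x))"
      by (simp add: algebra_simps)
    then show "h ((1 - a) *\<^sub>R t + a *\<^sub>R u) \<le> (1 - a) * h t + a * h u"
      unfolding h_def using convex_onD[OF cvx, of a] a by simp
  qed simp
  moreover have "(h has_real_derivative inner (y - x) g) (at 0)"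
  proof -
    have "((\<lambda>t. x + t *\<^sub>R (y - x)) has_derivative (\<lambda>t. t *\<^sub>R (y - x))) (at 0)"
      by (auto intro!: derivative_eq_intros)
    moreover have "GDERIV f (x + 0 *\<^sub>R (y - x)) :> g"
      using grad by simp
    ultimately have "(h has_derivative (\<lambda>t. inner (t *\<^sub>R (y - x)) g)) (at 0)"
      unfolding h_def gderiv_def by (rule has_derivative_compose)
    then show ?thesis
      unfolding has_field_derivative_def
      by (rule has_derivative_eq_rhs) (auto simp: fun_eq_iff)
  qed
  ultimately have "h 1 - h 0 \<ge> inner (y - x) g * (1 - 0)"
    by (intro convex_on_imp_above_tangent) auto
  then show ?thesis unfolding h_def by (simp add: inner_commute)
qed

lemma lipschitz_gradient_upper_bound:
  fixes f :: "'b::real_inner \<Rightarrow> real"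
  assumes grad: "\<And>z. GDERIV f z :> g z" and lip: "C-lipschitz_on UNIV g"
  shows "f y \<le> f x + inner (g x) (y - x) + C / 2 * (norm (y - x))\<^sup>2"
proof -
  define v where "v = y - x"
  define p where "p t = f (x + t *\<^sub>R v) - t * inner (g x) v - C / 2 * t\<^sup>2 * (norm v)\<^sup>2" for t
  have p_deriv: "(p has_real_derivative
      inner (g (x + t *\<^sub>R v)) v - inner (g x) v - C * t * (norm v)\<^sup>2) (at t)" for t
  proof -
    have "((\<lambda>t. x + t *\<^sub>R v) has_derivative (\<lambda>s. s *\<^sub>R v)) (at t)"
      by (auto intro!: derivative_eq_intros)
    from has_derivative_compose[OF this grad[unfolded gderiv_def]]
    have "((\<lambda>t. f (x + t *\<^sub>R v)) has_real_derivative inner (g (x + t *\<^sub>R v)) v) (at t)"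
      unfolding has_field_derivative_def
      by (rule has_derivative_eq_rhs) (auto simp: fun_eq_iff inner_commute)
    moreover have "((\<lambda>t. t * inner (g x) v) has_real_derivative inner (g x) v) (at t)"
      by (auto intro!: derivative_eq_intros)
    moreover have "((\<lambda>t. C / 2 * t\<^sup>2 * (norm v)\<^sup>2) has_real_derivative C * t * (norm v)\<^sup>2) (at t)"
      by (auto intro!: derivative_eq_intros)
    ultimately show ?thesis
      unfolding p_def by (intro DERIV_diff)
  qed
  have "p 1 \<le> p 0"
  proof (rule DERIV_nonpos_imp_decreasing_open[of 0 1 p])
    fix t :: real assume t: "0 < t" "t < 1"
    have "inner (g (x + t *\<^sub>R v)) v - inner (g x) v \<le> norm (g (x + t *\<^sub>R v) - g x) * norm v"
      by (metis inner_diff_left norm_cauchy_schwarz)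
    also have "\<dots> \<le> C * norm (t *\<^sub>R v) * norm v"
      using lipschitz_on_normD[OF lip, of "x + t *\<^sub>R v" x] by (simp add: mult_right_mono)
    also have "\<dots> = C * t * (norm v)\<^sup>2"
      using t by (simp add: power2_eq_square)
    finally have "inner (g (x + t *\<^sub>R v)) v - inner (g x) v - C * t * (norm v)\<^sup>2 \<le> 0"
      by simp
    with p_deriv show "\<exists>y. (p has_real_derivative y) (at t) \<and> y \<le> 0"
      by blast
  next
    show "continuous_on {0..1} p"
      using p_deriv by (meson DERIV_isCont continuous_at_imp_continuous_on)
  qed simp
  then show ?thesis unfolding p_def v_def by simp
qed

text \<open>The tilted function \<open>\<lambda>w. f w - inner (g x) w\<close> is minimal at \<open>x\<close>; compare it with
  its value one gradient step of length \<open>1 / C\<close> away from \<open>z\<close>.\<close>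

lemma convex_lipschitz_gradient_lower_bound:
  fixes f :: "'b::real_inner \<Rightarrow> real"
  assumes cvx: "convex_on UNIV f" and grad: "\<And>z. GDERIV f z :> g z"
    and lip: "C-lipschitz_on UNIV g" and C: "C > 0"
  shows "f x + inner (g x) (z - x) + (norm (g z - g x))\<^sup>2 / (2 * C) \<le> f z"
proof -
  define \<phi> where "\<phi> w = f w - inner (g x) w" for w
  define d where "d = g z - g x"
  define w where "w = z - (1 / C) *\<^sub>R d"
  have "\<phi> x \<le> \<phi> w"
    using convex_gderiv_above_tangent[OF cvx grad, of x w] unfolding \<phi>_def
    by (simp add: inner_diff_right)
  also have "\<phi> w \<le> \<phi> z + inner (g z - g x) (w - z) + C / 2 * (norm (w - z))\<^sup>2"
  proof (rule lipschitz_gradient_upper_bound)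
    show "GDERIV \<phi> w :> g w - g x" for w
      using GDERIV_diff[OF grad GDERIV_inner_const] unfolding \<phi>_def by simp
    show "C-lipschitz_on UNIV (\<lambda>w. g w - g x)"
      using lipschitz_on_diff[OF lip lipschitz_on_constant] by simp
  qed
  also have "\<dots> = \<phi> z - (norm d)\<^sup>2 / (2 * C)"
  proof -
    have "inner (g z - g x) (w - z) = - (norm d)\<^sup>2 / C"
      unfolding w_def d_def by (simp add: power2_norm_eq_inner)
    moreover have "C / 2 * (norm (w - z))\<^sup>2 = (norm d)\<^sup>2 / (2 * C)"
      unfolding w_def using C by (simp add: power2_eq_square field_simps)
    ultimately show ?thesis
      by (simp add: field_simps)
  qed
  finally show ?thesis
    unfolding \<phi>_def d_def by (simp add: inner_diff_right)
qed

lemma convex_lipschitz_gradient_cocoercive: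
  fixes f :: "'b::real_inner \<Rightarrow> real"
  assumes cvx: "convex_on UNIV f" and grad: "\<And>z. GDERIV f z :> g z"
    and lip: "C-lipschitz_on UNIV g"
  shows "(norm (g z - g x))\<^sup>2 \<le> C * inner (g z - g x) (z - x)"
proof (cases "C = 0")
  case True
  then show ?thesis
    using lipschitz_on_normD[OF lip, of z x] by simp
next
  case False
  then have C: "C > 0"
    using lipschitz_on_nonneg[OF lip] by simp
  have "(norm (g z - g x))\<^sup>2 / C \<le> inner (g z - g x) (z - x)"
    using convex_lipschitz_gradient_lower_bound[OF cvx grad lip C, of x z]
      convex_lipschitz_gradient_lower_bound[OF cvx grad lip C, of z x]
    by (simp add: norm_minus_commute inner_diff_left inner_diff_right field_simps)
  then show ?thesis
    using C by (simp add: field_simps)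
qed

lemma cocoercive_inner_shift_lower_bound:
  fixes u d w :: "'b::real_inner"
  assumes coco: "(norm u)\<^sup>2 \<le> C * inner u d" and C: "C \<ge> 0"
  shows "- (C / 4 * (norm w)\<^sup>2) \<le> inner u (d + w)"
proof (cases "C = 0")
  case True
  then show ?thesis
    using coco by simp
next
  case False
  then have C: "C > 0"
    using C by simp
  have "0 \<le> (norm (u + (C / 2) *\<^sub>R w))\<^sup>2"
    by simp
  also have "\<dots> = (norm u)\<^sup>2 + C * inner u w + (C / 2) * (C / 2) * (norm w)\<^sup>2"
    by (simp add: power2_norm_eq_inner inner_add_left inner_add_right inner_commute algebra_simps)
  also have "\<dots> \<le> C * inner u d + C * inner u w + (C / 2) * (C / 2) * (norm w)\<^sup>2"
    using coco by simp
  also have "\<dots> = C * (inner u (d + w) + C / 4 * (norm w)\<^sup>2)"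
    by (simp add: inner_add_right algebra_simps)
  finally show ?thesis
    using C by (simp add: zero_le_mult_iff)
qed

lemma inner_le_Young:
  fixes a b :: "'b::real_inner"
  assumes "\<epsilon> > 0"
  shows "inner a b \<le> \<epsilon> / 2 * (norm a)\<^sup>2 + (norm b)\<^sup>2 / (2 * \<epsilon>)"
proof -
  have "0 \<le> (norm (\<epsilon> *\<^sub>R a - b))\<^sup>2 / (2 * \<epsilon>)"
    using assms by simp
  also have "\<dots> = \<epsilon> / 2 * (norm a)\<^sup>2 - inner a b + (norm b)\<^sup>2 / (2 * \<epsilon>)"
    using assms
    by (simp add: power2_norm_eq_inner inner_diff_left inner_diff_right inner_commute field_simps)
  finally show ?thesis
    by simp
qed

lemma lipschitz_snd_inner_le:
  fixes g :: "'b::real_inner \<times> 'b \<Rightarrow> 'b \<times> 'b"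
  assumes lip: "C-lipschitz_on UNIV g" and m: "m > 0"
  shows "inner (snd (g (x, y)) - snd (g (x, y'))) w
    \<le> m * (norm w)\<^sup>2 + C\<^sup>2 / (4 * m) * (norm (y - y'))\<^sup>2"
proof -
  define d where "d = snd (g (x, y)) - snd (g (x, y'))"
  have "norm d \<le> norm (g (x, y) - g (x, y'))"
    unfolding d_def snd_diff[symmetric] by (metis norm_snd_le prod.collapse)
  also have "\<dots> \<le> C * norm (y - y')"
    using lipschitz_on_normD[OF lip, of "(x, y)" "(x, y')"] by simp
  finally have "(norm d)\<^sup>2 / (4 * m) \<le> C\<^sup>2 / (4 * m) * (norm (y - y'))\<^sup>2"
    using m by (simp add: divide_right_mono power_mono power_mult_distrib[symmetric])
  moreover have "inner w d \<le> m * (norm w)\<^sup>2 + (norm d)\<^sup>2 / (4 * m)"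
    using inner_le_Young[of "2 * m" w d] m by simp
  ultimately show ?thesis
    unfolding d_def by (simp add: inner_commute)
qed

lemma tendsto_lipschitz_Pair:
  assumes "C-lipschitz_on UNIV g" and "a \<longlonglongrightarrow> x" and "b \<longlonglongrightarrow> y"
  shows "(\<lambda>k. g (a k, b k)) \<longlonglongrightarrow> g (x, y)"
proof (rule isCont_tendsto_compose[OF _ tendsto_Pair[OF assms(2,3)]])
  show "isCont g (x, y)"
    using lipschitz_on_continuous_on[OF assms(1)] by (simp add: continuous_on_eq_continuous_at)
qed

section \<open>The incidence operator of the graph\<close>

text \<open>The block of \<open>A\<close> in edge row \<open>e\<close> and node column \<open>i\<close> is \<open>incidence i e\<close> times \<open>I\<^sub>n\<close>.\<close>

definition incidence :: "nat \<Rightarrow> nat \<times> nat \<Rightarrow> real" where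
  "incidence i e = (if fst e = i then 1 else if snd e = i then -1 else 0)"

lemma incidence_sq_le_1: "(incidence i e)\<^sup>2 \<le> 1"
  by (simp add: incidence_def)

lemma edge_set_finite: "edge_set N E \<Longrightarrow> finite E"
  unfolding edge_set_def by (rule finite_subset[of _ "{..<N} \<times> {..<N}"]) auto

lemma edge_set_memD: "edge_set N E \<Longrightarrow> e \<in> E \<Longrightarrow> fst e < snd e \<and> snd e < N"
  unfolding edge_set_def by auto

lemma ATlam_eq_sum_incidence:
  assumes "edge_set N E"
  shows "ATlam E \<mu> i = (\<Sum>e\<in>E. incidence i e *\<^sub>R \<mu> e)"
proof -
  have "incidence i e *\<^sub>R \<mu> e = (if fst e = i then \<mu> e else 0) - (if snd e = i then \<mu> e else 0)"
    if "e \<in> E" for e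
    using edge_set_memD[OF assms that] by (auto simp: incidence_def)
  then show ?thesis
    unfolding ATlam_def
    by (simp add: sum_subtractf sum.inter_filter[OF edge_set_finite[OF assms]])
qed

lemma Aw_eq_sum_incidence:
  assumes "edge_set N E" and "e \<in> E"
  shows "Aw w e = (\<Sum>i<N. incidence i e *\<^sub>R w i)"
proof -
  have "incidence i e *\<^sub>R w i = (if fst e = i then w i else 0) - (if snd e = i then w i else 0)" for i
    using edge_set_memD[OF assms] by (auto simp: incidence_def)
  then show ?thesis
    using edge_set_memD[OF assms] by (simp add: Aw_def sum_subtractf)
qed

lemma sum_inner_ATlam:
  assumes "edge_set N E"
  shows "(\<Sum>i<N. inner (ATlam E \<mu> i) (w i)) = (\<Sum>e\<in>E. inner (\<mu> e) (Aw w e))"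
proof -
  have "(\<Sum>i<N. inner (ATlam E \<mu> i) (w i)) = (\<Sum>i<N. \<Sum>e\<in>E. incidence i e * inner (\<mu> e) (w i))"
    by (simp add: ATlam_eq_sum_incidence[OF assms] inner_sum_left)
  also have "\<dots> = (\<Sum>e\<in>E. \<Sum>i<N. incidence i e * inner (\<mu> e) (w i))"
    by (rule sum.swap)
  also have "\<dots> = (\<Sum>e\<in>E. inner (\<mu> e) (Aw w e))"
    by (simp add: Aw_eq_sum_incidence[OF assms] inner_sum_right)
  finally show ?thesis .
qed

lemma deg_eq_sum_incidence_sq:
  assumes "edge_set N E"
  shows "real (deg E i) = (\<Sum>e\<in>E. (incidence i e)\<^sup>2)"
proof -
  have "real (deg E i) = (\<Sum>e\<in>{e\<in>E. fst e = i \<or> snd e = i}. 1)"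
    unfolding deg_def by simp
  also have "\<dots> = (\<Sum>e\<in>E. if fst e = i \<or> snd e = i then 1 else 0)"
    by (rule sum.inter_filter[OF edge_set_finite[OF assms]])
  also have "\<dots> = (\<Sum>e\<in>E. (incidence i e)\<^sup>2)"
    by (rule sum.cong) (auto simp: incidence_def)
  finally show ?thesis .
qed

lemma Aw_fun_upd:
  assumes "edge_set N E" and "e \<in> E"
  shows "Aw (W(i := w)) e = Aw W e + incidence i e *\<^sub>R (w - W i)"
  using edge_set_memD[OF assms] by (auto simp: Aw_def incidence_def algebra_simps)

lemma Aw_diff: "Aw (\<lambda>i. a i - b i) e = Aw a e - Aw b e"
  by (simp add: Aw_def algebra_simps)

lemma sum_inner_Aw_le:
  assumes E: "edge_set N E" and eps: "\<And>i. i < N \<Longrightarrow> eps i > 0"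
  shows "(\<Sum>e\<in>E. inner (Aw u e) (r e)) \<le>
     (\<Sum>i<N. real (deg E i) / (2 * eps i) * (norm (u i))\<^sup>2) + (\<Sum>i<N. eps i) / 2 * (\<Sum>e\<in>E. (norm (r e))\<^sup>2)"
proof -
  have Young: "incidence i e * inner (r e) (u i)
      \<le> (incidence i e)\<^sup>2 * ((norm (u i))\<^sup>2 / (2 * eps i) + eps i / 2 * (norm (r e))\<^sup>2)"
    if "i < N" for i e
    using inner_le_Young[OF eps[OF that], of "r e" "u i"]
      inner_le_Young[OF eps[OF that], of "- r e" "u i"]
    by (auto simp: incidence_def)
  have "(\<Sum>e\<in>E. inner (Aw u e) (r e)) = (\<Sum>i<N. \<Sum>e\<in>E. incidence i e * inner (r e) (u i))"
    by (simp add: sum_inner_ATlam[OF E, symmetric] ATlam_eq_sum_incidence[OF E]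
        inner_sum_left inner_sum_right inner_commute)
  also have "\<dots> \<le> (\<Sum>i<N. \<Sum>e\<in>E. (incidence i e)\<^sup>2 * ((norm (u i))\<^sup>2 / (2 * eps i)
                                        + eps i / 2 * (norm (r e))\<^sup>2))"
    by (intro sum_mono Young) simp
  also have "\<dots> = (\<Sum>i<N. real (deg E i) / (2 * eps i) * (norm (u i))\<^sup>2)
      + (\<Sum>e\<in>E. (\<Sum>i<N. (incidence i e)\<^sup>2 * eps i) / 2 * (norm (r e))\<^sup>2)"
    by (simp add: deg_eq_sum_incidence_sq[OF E] distrib_left sum.distrib sum_distrib_right
        sum_divide_distrib sum.swap[of _ E] mult.assoc)
  also have "\<dots> \<le> (\<Sum>i<N. real (deg E i) / (2 * eps i) * (norm (u i))\<^sup>2)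
      + (\<Sum>e\<in>E. (\<Sum>i<N. eps i) / 2 * (norm (r e))\<^sup>2)"
    using eps incidence_sq_le_1
    by (intro add_left_mono sum_mono mult_right_mono divide_right_mono)
      (auto intro!: mult_left_le_one_le less_imp_le)
  finally show ?thesis
    by (simp add: sum_distrib_left)
qed

lemma tendsto_ATlam:
  fixes \<mu> :: "nat \<Rightarrow> nat \<times> nat \<Rightarrow> 'a::real_normed_vector"
  assumes "\<And>e. e \<in> E \<Longrightarrow> (\<lambda>k. \<mu> k e) \<longlonglongrightarrow> \<mu>' e"
  shows "(\<lambda>k. ATlam E (\<mu> k) i) \<longlonglongrightarrow> ATlam E \<mu>' i"
proof -
  have "(\<lambda>k. \<Sum>e\<in>A. \<mu> k e) \<longlonglongrightarrow> (\<Sum>e\<in>A. \<mu>' e)" if "A \<subseteq> E" for A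
    using tendsto_sum[of A "\<lambda>e k. \<mu> k e" \<mu>' sequentially] assms that by auto
  then show ?thesis
    unfolding ATlam_def by (intro tendsto_diff) auto
qed

section \<open>Optimality conditions of the block updates\<close>

lemma GDERIV_Fi:
  assumes "GDERIV (f i) z :> g"
  shows "GDERIV (Fi f mu1 mu2 i) z :> g + (mu1 *\<^sub>R fst z, mu2 *\<^sub>R snd z)"
proof -
  have fst_sq: "GDERIV (\<lambda>z. (norm (fst z))\<^sup>2) z :> (2 *\<^sub>R fst z, 0)"
    using has_derivative_compose[OF has_derivative_fst[OF has_derivative_ident]
        has_derivative_sqnorm_at, of z]
    unfolding gderiv_def by (simp add: inner_prod_def inner_commute)
  have snd_sq: "GDERIV (\<lambda>z. (norm (snd z))\<^sup>2) z :> (0, 2 *\<^sub>R snd z)"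
    using has_derivative_compose[OF has_derivative_snd[OF has_derivative_ident]
        has_derivative_sqnorm_at, of z]
    unfolding gderiv_def by (simp add: inner_prod_def inner_commute)
  from GDERIV_add[OF GDERIV_add[OF assms GDERIV_cmult[OF fst_sq, of "mu1 / 2"]]
      GDERIV_cmult[OF snd_sq, of "mu2 / 2"]]
  show ?thesis
    unfolding Fi_def[abs_def] by (simp add: algebra_simps)
qed

lemma KKT_iff:
  assumes grad: "\<And>i. i < N \<Longrightarrow> GDERIV (f i) (xs i, ys i) :> G i (xs i, ys i)"
  shows "KKT N E f mu1 mu2 xs ys ls \<longleftrightarrow> (\<forall>e\<in>E. Aw xs e = 0) \<and>
    (\<forall>i<N. fst (G i (xs i, ys i)) + mu1 *\<^sub>R xs i = ATlam E ls i \<and>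
           snd (G i (xs i, ys i)) + mu2 *\<^sub>R ys i = 0)"
proof -
  have "GDERIV (Fi f mu1 mu2 i) (xs i, ys i) :> (ATlam E ls i, 0) \<longleftrightarrow>
      G i (xs i, ys i) + (mu1 *\<^sub>R xs i, mu2 *\<^sub>R ys i) = (ATlam E ls i, 0)"
    (is "?deriv \<longleftrightarrow> ?eq") if "i < N" for i
  proof
    have "GDERIV (Fi f mu1 mu2 i) (xs i, ys i) :> G i (xs i, ys i) + (mu1 *\<^sub>R xs i, mu2 *\<^sub>R ys i)"
      using GDERIV_Fi[of f i, OF grad[OF that]] by simp
    then show "?deriv \<Longrightarrow> ?eq" and "?eq \<Longrightarrow> ?deriv"
      by (auto intro: GDERIV_unique)
  qed
  then show ?thesis
    unfolding KKT_def by (auto simp: prod_eq_iff)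
qed

lemma sum_fun_upd_arg:
  fixes g :: "'i \<Rightarrow> 'b \<Rightarrow> 'c::ab_group_add"
  assumes "finite A" and "i \<in> A"
  shows "(\<Sum>j\<in>A. g j ((W(i := w)) j)) = (\<Sum>j\<in>A. g j (W j)) - g i (W i) + g i w"
proof -
  have "(\<Sum>j\<in>A - {i}. g j ((W(i := w)) j)) = (\<Sum>j\<in>A - {i}. g j (W j))"
    by (rule sum.cong) auto
  then show ?thesis
    using sum.remove[OF assms, of "\<lambda>j. g j ((W(i := w)) j)"] sum.remove[OF assms, of "\<lambda>j. g j (W j)"]
    by simp
qed

lemma norm_add_scaleR_sq:
  fixes a h :: "'b::real_inner"
  shows "(norm (a + c *\<^sub>R h))\<^sup>2 = (norm a)\<^sup>2 + 2 * c * inner a h + c\<^sup>2 * (norm h)\<^sup>2"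
  unfolding power2_norm_eq_inner
  by (simp add: inner_add_left inner_add_right inner_commute power2_eq_square algebra_simps)

lemma Lrho_fun_upd:
  assumes E: "edge_set N E" and i: "i < N"
  shows "Lrho N E f mu1 mu2 rho (W(i := w)) Y lam =
    Lrho N E f mu1 mu2 rho W Y lam - Fi f mu1 mu2 i (W i, Y i) + Fi f mu1 mu2 i (w, Y i)
    + inner (rho *\<^sub>R ATlam E (Aw W) i - ATlam E lam i) (w - W i)
    + rho * real (deg E i) / 2 * (norm (w - W i))\<^sup>2"
proof -
  have F: "(\<Sum>j<N. Fi f mu1 mu2 j ((W(i := w)) j, Y j))
      = (\<Sum>j<N. Fi f mu1 mu2 j (W j, Y j)) - Fi f mu1 mu2 i (W i, Y i) + Fi f mu1 mu2 i (w, Y i)"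
    using sum_fun_upd_arg[of "{..<N}" i "\<lambda>j x. Fi f mu1 mu2 j (x, Y j)"] i by simp
  have lin: "(\<Sum>e\<in>E. inner (lam e) (Aw (W(i := w)) e))
      = (\<Sum>e\<in>E. inner (lam e) (Aw W e)) + inner (ATlam E lam i) (w - W i)"
    by (simp add: Aw_fun_upd[OF E] inner_add_right sum.distrib ATlam_eq_sum_incidence[OF E]
        inner_sum_left)
  have quad: "(\<Sum>e\<in>E. (norm (Aw (W(i := w)) e))\<^sup>2)
      = (\<Sum>e\<in>E. (norm (Aw W e))\<^sup>2) + 2 * inner (ATlam E (Aw W) i) (w - W i)
        + real (deg E i) * (norm (w - W i))\<^sup>2"
    by (simp add: Aw_fun_upd[OF E] norm_add_scaleR_sq sum.distrib ATlam_eq_sum_incidence[OF E]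
        deg_eq_sum_incidence_sq[OF E] inner_sum_left sum_distrib_left sum_distrib_right
        mult.assoc)
  show ?thesis
    unfolding Lrho_def F lin quad by (simp add: inner_diff_left algebra_simps)
qed

lemma consensus_step_optimality:
  assumes E: "edge_set N E" and i: "i < N" and grad: "\<And>z. GDERIV (f i) z :> g z"
    and min: "\<And>w. Lrho N E f mu1 mu2 rho (W(i := x)) Y lam + tau / 2 * (norm (x - W i))\<^sup>2
                 \<le> Lrho N E f mu1 mu2 rho (W(i := w)) Y lam + tau / 2 * (norm (w - W i))\<^sup>2"
  shows "fst (g (x, Y i)) + mu1 *\<^sub>R x + (tau + rho * real (deg E i)) *\<^sub>R (x - W i)
    = ATlam E lam i - rho *\<^sub>R ATlam E (Aw W) i"
proof -
  define c where "c = rho *\<^sub>R ATlam E (Aw W) i - ATlam E lam i"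
  define \<kappa> where "\<kappa> = tau + rho * real (deg E i)"
  define \<psi> where "\<psi> w = Fi f mu1 mu2 i (w, Y i) + inner c (w - W i) + \<kappa> / 2 * (norm (w - W i))\<^sup>2"
    for w
  have min': "\<psi> x \<le> \<psi> w" for w
    using min[of w] unfolding \<psi>_def c_def \<kappa>_def Lrho_fun_upd[OF E i]
    by (simp add: algebra_simps add_divide_distrib)
  have "GDERIV \<psi> x :> (fst (g (x, Y i)) + mu1 *\<^sub>R x) + c + \<kappa> *\<^sub>R (x - W i)"
  proof -
    have "GDERIV (\<lambda>w. Fi f mu1 mu2 i (w, Y i)) x :> fst (g (x, Y i)) + mu1 *\<^sub>R x"
      using GDERIV_partial_fst[OF GDERIV_Fi[of f i, OF grad]] by simp
    moreover have "GDERIV (\<lambda>w. inner c (w - W i)) x :> c"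
      using GDERIV_diff[OF GDERIV_inner_const GDERIV_const] by (simp add: inner_diff_right)
    moreover have "GDERIV (\<lambda>w. \<kappa> / 2 * (norm (w - W i))\<^sup>2) x :> \<kappa> *\<^sub>R (x - W i)"
      using GDERIV_cmult[OF GDERIV_norm_diff_sq, of "\<kappa> / 2"] by simp
    ultimately show ?thesis
      unfolding \<psi>_def by (intro GDERIV_add)
  qed
  from GDERIV_minimum_eq_0[OF this min']
  have "(fst (g (x, Y i)) + mu1 *\<^sub>R x) + c + \<kappa> *\<^sub>R (x - W i) = 0" .
  then show ?thesis
    unfolding c_def \<kappa>_def by (simp add: algebra_simps)
qed

lemma local_step_optimality:
  assumes grad: "\<And>z. GDERIV (f i) z :> g z"
    and min: "\<And>w. Fi f mu1 mu2 i (x, y) + zeta / 2 * (norm (y - y0))\<^sup>2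
                 \<le> Fi f mu1 mu2 i (x, w) + zeta / 2 * (norm (w - y0))\<^sup>2"
  shows "snd (g (x, y)) + mu2 *\<^sub>R y + zeta *\<^sub>R (y - y0) = 0"
proof -
  have "GDERIV (\<lambda>w. Fi f mu1 mu2 i (x, w)) y :> snd (g (x, y)) + mu2 *\<^sub>R y"
    using GDERIV_partial_snd[OF GDERIV_Fi[of f i, OF grad]] by simp
  moreover have "GDERIV (\<lambda>w. zeta / 2 * (norm (w - y0))\<^sup>2) y :> zeta *\<^sub>R (y - y0)"
    using GDERIV_cmult[OF GDERIV_norm_diff_sq, of "zeta / 2"] by simp
  ultimately have "GDERIV (\<lambda>w. Fi f mu1 mu2 i (x, w) + zeta / 2 * (norm (w - y0))\<^sup>2) y
      :> snd (g (x, y)) + mu2 *\<^sub>R y + zeta *\<^sub>R (y - y0)"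
    by (rule GDERIV_add)
  from GDERIV_minimum_eq_0[OF this min] show ?thesis .
qed

text \<open>Cocoercivity of the joint gradient between \<open>(x1, y0)\<close> and \<open>(xs, ys)\<close>, shifted by the
  local step \<open>y1 - y0\<close>, trades the consensus inner product for a telescoping term in the local
  block.\<close>

lemma consensus_gradient_inner_lower_bound:
  fixes f :: "'b::real_inner \<times> 'b \<Rightarrow> real"
  assumes cvx: "convex_on UNIV f" and grad: "\<And>z. GDERIV f z :> g z"
    and lip: "C-lipschitz_on UNIV g" and m: "0 < m" "m \<le> mu2"
    and step: "snd (g (x1, y1)) + mu2 *\<^sub>R y1 + zeta *\<^sub>R (y1 - y0) = 0"
    and opt: "snd (g (xs, ys)) + mu2 *\<^sub>R ys = 0"
  shows "zeta / 2 * ((norm (y1 - ys))\<^sup>2 - (norm (y0 - ys))\<^sup>2)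
      + (zeta / 2 - C\<^sup>2 / (4 * m) - C / 4) * (norm (y1 - y0))\<^sup>2
    \<le> inner (fst (g (x1, y0)) - fst (g (xs, ys))) (x1 - xs)"
proof -
  define a where "a = fst (g (x1, y0)) - fst (g (xs, ys))"
  define b where "b = snd (g (x1, y0)) - snd (g (xs, ys))"
  define e where "e = snd (g (x1, y1)) - snd (g (x1, y0))"
  define Y where "Y = y1 - ys"
  define v where "v = y1 - y0"
  have "- (C / 4 * (norm (0::'b, v))\<^sup>2)
      \<le> inner (g (x1, y0) - g (xs, ys)) ((x1, y0) - (xs, ys) + (0, v))"
    by (rule cocoercive_inner_shift_lower_bound[OF convex_lipschitz_gradient_cocoercive[OF cvx grad lip]
          lipschitz_on_nonneg[OF lip]])
  then have coco: "- (C / 4 * (norm v)\<^sup>2) \<le> inner a (x1 - xs) + inner b Y"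
    unfolding a_def b_def Y_def v_def by (simp add: inner_prod_def algebra_simps)
  have "b = - (mu2 *\<^sub>R Y) - zeta *\<^sub>R v - e"
    using step opt unfolding b_def e_def Y_def v_def by (simp add: algebra_simps eq_neg_iff_add_eq_0)
  then have bY: "inner b Y = - (mu2 * (norm Y)\<^sup>2) - zeta * inner v Y - inner e Y"
    by (simp add: inner_diff_left power2_norm_eq_inner)
  have Young: "- inner e Y \<le> m * (norm Y)\<^sup>2 + C\<^sup>2 / (4 * m) * (norm v)\<^sup>2"
    using lipschitz_snd_inner_le[OF lip m(1), of x1 y0 y1 Y]
    unfolding e_def v_def by (simp add: inner_diff_left norm_minus_commute)
  have "zeta * inner v Y
      = zeta / 2 * (norm Y)\<^sup>2 - zeta / 2 * (norm (y0 - ys))\<^sup>2 + zeta / 2 * (norm v)\<^sup>2"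
  proof -
    have "2 * inner v Y = (norm Y)\<^sup>2 - (norm (y0 - ys))\<^sup>2 + (norm v)\<^sup>2"
      unfolding Y_def v_def
      by (simp add: power2_norm_eq_inner inner_diff_left inner_diff_right inner_commute)
    from arg_cong[OF this, of "\<lambda>t. zeta / 2 * t"] show ?thesis
      by (simp add: algebra_simps)
  qed
  then have "zeta / 2 * ((norm (y1 - ys))\<^sup>2 - (norm (y0 - ys))\<^sup>2)
      + (zeta / 2 - C\<^sup>2 / (4 * m) - C / 4) * (norm (y1 - y0))\<^sup>2
    = zeta * inner v Y - C\<^sup>2 / (4 * m) * (norm v)\<^sup>2 - C / 4 * (norm v)\<^sup>2"
    unfolding Y_def v_def by (simp add: algebra_simps)
  also have "\<dots> \<le> inner a (x1 - xs)"
    using coco bY Young mult_right_mono[OF m(2) zero_le_power2[of "norm Y"]] by linarith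
  finally show ?thesis
    unfolding a_def .
qed

section \<open>Fejer monotone sequences\<close>

lemma summable_of_telescoping:
  fixes V D :: "nat \<Rightarrow> real"
  assumes step: "\<And>k. V (Suc k) + D k \<le> V k" and V: "\<And>k. 0 \<le> V k" and D: "\<And>k. 0 \<le> D k"
  shows "summable D"
proof (rule summableI_nonneg_bounded[where x = "V 0"])
  have partial: "(\<Sum>k<n. D k) \<le> V 0 - V n" for n
  proof (induction n)
    case (Suc n)
    then show ?case
      using step[of n] by simp
  qed simp
  show "(\<Sum>k<n. D k) \<le> V 0" for n
    using partial[of n] V[of n] by linarith
qed (rule D)

lemma tendsto_of_norm_sq_bound:
  fixes X :: "nat \<Rightarrow> 'a::real_normed_vector"
  assumes c: "c > 0" and bound: "\<And>k. c * (norm (X k - l))\<^sup>2 \<le> B k" and B: "B \<longlonglongrightarrow> 0"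
  shows "X \<longlonglongrightarrow> l"
proof -
  have "norm (X k - l) \<le> sqrt (B k / c)" for k
  proof (rule real_le_rsqrt)
    show "(norm (X k - l))\<^sup>2 \<le> B k / c"
      using bound[of k] c by (simp add: field_simps)
  qed
  then have "\<forall>\<^sub>F k in sequentially. norm (X k - l) \<le> sqrt (B k / c)"
    by (intro always_eventually allI)
  moreover have "(\<lambda>k. sqrt (B k / c)) \<longlonglongrightarrow> 0"
    using tendsto_real_sqrt[OF tendsto_divide_zero[OF B, of c]] by simp
  ultimately have "(\<lambda>k. X k - l) \<longlonglongrightarrow> 0"
    by (rule Lim_null_comparison)
  then show ?thesis
    by (simp add: LIM_zero_iff)
qed

lemma bounded_range_of_norm_sq_bound:
  fixes X :: "nat \<Rightarrow> 'a::real_normed_vector"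
  assumes c: "c > 0" and bound: "\<And>k. c * (norm (X k - l))\<^sup>2 \<le> B"
  shows "bounded (range X)"
proof (rule bounded_subset[OF bounded_cball[of l "sqrt (B / c)"]])
  have "norm (X k - l) \<le> sqrt (B / c)" for k
  proof (rule real_le_rsqrt)
    show "(norm (X k - l))\<^sup>2 \<le> B / c"
      using bound[of k] c by (simp add: field_simps)
  qed
  then show "range X \<subseteq> cball l (sqrt (B / c))"
    by (auto simp: dist_norm norm_minus_commute)
qed

lemma finite_family_convergent_subseq:
  fixes s :: "nat \<Rightarrow> 'j \<Rightarrow> 'a::{real_normed_vector, heine_borel}"
  assumes "finite J" and "\<And>j. j \<in> J \<Longrightarrow> bounded (range (\<lambda>k. s k j))"
  shows "\<exists>r x. strict_mono r \<and> (\<forall>j\<in>J. (\<lambda>k. s (r k) j) \<longlonglongrightarrow> x j)"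
  using assms
proof (induction J rule: finite_induct)
  case empty
  show ?case
    using strict_mono_id by blast
next
  case (insert j J)
  then obtain r x where r: "strict_mono r" and x: "\<forall>j\<in>J. (\<lambda>k. s (r k) j) \<longlonglongrightarrow> x j"
    by blast
  have "bounded (range (\<lambda>k. s (r k) j))"
    using insert.prems[of j] by (rule bounded_subset) auto
  then obtain y r' where r': "strict_mono r'" and y: "((\<lambda>k. s (r k) j) \<circ> r') \<longlonglongrightarrow> y"
    using bounded_imp_convergent_subsequence by blast
  have lim: "(\<lambda>k. s ((r \<circ> r') k) i) \<longlonglongrightarrow> (x(j := y)) i" if "i \<in> insert j J" for i
  proof (cases "i = j")
    case True
    then show ?thesis
      using y by (simp add: o_def)
  next
    case False
    then show ?thesis
      using LIMSEQ_subseq_LIMSEQ[OF x[rule_format, of i] r'] that by (simp add: o_def)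
  qed
  moreover have "strict_mono (r \<circ> r')"
    using r r' by (rule strict_mono_o)
  ultimately show ?case
    by blast
qed

definition weighted_sq_dist :: "'j set \<Rightarrow> ('j \<Rightarrow> real) \<Rightarrow> ('j \<Rightarrow> 'a::real_normed_vector) \<Rightarrow> ('j \<Rightarrow> 'a) \<Rightarrow> real"
  where "weighted_sq_dist J w u x = (\<Sum>j\<in>J. w j * (norm (u j - x j))\<^sup>2)"

lemma weighted_sq_dist_nonneg:
  "(\<And>j. j \<in> J \<Longrightarrow> 0 \<le> w j) \<Longrightarrow> 0 \<le> weighted_sq_dist J w u x"
  unfolding weighted_sq_dist_def by (auto intro!: sum_nonneg)

lemma weighted_sq_dist_ge_component:
  assumes "finite J" and "\<And>j. j \<in> J \<Longrightarrow> 0 \<le> w j" and "j \<in> J"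
  shows "w j * (norm (u j - x j))\<^sup>2 \<le> weighted_sq_dist J w u x"
  unfolding weighted_sq_dist_def using assms by (intro member_le_sum) auto

lemma fejer_monotone_convergent:
  fixes u :: "nat \<Rightarrow> 'j \<Rightarrow> 'a::{real_normed_vector, heine_borel}"
  assumes J: "finite J" and w: "\<And>j. j \<in> J \<Longrightarrow> 0 < w j" and "x0 \<in> S"
    and fejer: "\<And>x k. x \<in> S \<Longrightarrow> weighted_sq_dist J w (u (Suc k)) x \<le> weighted_sq_dist J w (u k) x"
    and cluster: "\<And>r x. strict_mono r \<Longrightarrow> \<forall>j\<in>J. (\<lambda>k. u (r k) j) \<longlonglongrightarrow> x j \<Longrightarrow> x \<in> S"
  shows "\<exists>x\<in>S. \<forall>j\<in>J. (\<lambda>k. u k j) \<longlonglongrightarrow> x j"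
proof -
  define V where "V x k = weighted_sq_dist J w (u k) x" for x k
  have component: "w j * (norm (u k j - x j))\<^sup>2 \<le> V x k" if "j \<in> J" for x k j
    unfolding V_def using w that by (intro weighted_sq_dist_ge_component J less_imp_le)
  have dec: "decseq (V x)" if "x \<in> S" for x
    unfolding V_def using fejer[OF that] by (rule decseq_SucI)
  have "bounded (range (\<lambda>k. u k j))" if "j \<in> J" for j
  proof (rule bounded_range_of_norm_sq_bound[OF w[OF that]])
    show "w j * (norm (u k j - x0 j))\<^sup>2 \<le> V x0 0" for k
      using component[OF that, of k x0] decseqD[OF dec[OF \<open>x0 \<in> S\<close>], of 0 k] by simp
  qed
  then obtain r x where r: "strict_mono r" and lim: "\<forall>j\<in>J. (\<lambda>k. u (r k) j) \<longlonglongrightarrow> x j"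
    using finite_family_convergent_subseq[OF J] by blast
  have "x \<in> S"
    using cluster[OF r] lim by blast
  have "(\<lambda>k. V x (r k)) \<longlonglongrightarrow> (\<Sum>j\<in>J. w j * (norm (x j - x j))\<^sup>2)"
    unfolding V_def weighted_sq_dist_def using lim
    by (intro tendsto_sum tendsto_mult_left tendsto_power tendsto_norm tendsto_diff tendsto_const)
      auto
  then have "(V x \<circ> r) \<longlonglongrightarrow> 0"
    by (simp add: o_def)
  moreover obtain L where "V x \<longlonglongrightarrow> L"
  proof (rule decseq_convergent[OF dec[OF \<open>x \<in> S\<close>]])
    show "\<forall>k. 0 \<le> V x k"
      unfolding V_def using w by (intro allI weighted_sq_dist_nonneg) (simp add: less_imp_le)
  qed
  ultimately have "V x \<longlonglongrightarrow> 0"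
    using LIMSEQ_unique[OF LIMSEQ_subseq_LIMSEQ[OF _ r]] by blast
  then have "(\<lambda>k. u k j) \<longlonglongrightarrow> x j" if "j \<in> J" for j
    by (rule tendsto_of_norm_sq_bound[OF w[OF that] component[OF that]])
  with \<open>x \<in> S\<close> show ?thesis
    by blast
qed

section \<open>Convergence of the iteration\<close>

locale admm =
  fixes N :: nat and E :: "(nat \<times> nat) set"
    and f :: "nat \<Rightarrow> 'a::euclidean_space \<times> 'a \<Rightarrow> real"
    and G :: "nat \<Rightarrow> 'a \<times> 'a \<Rightarrow> 'a \<times> 'a"
    and C :: "nat \<Rightarrow> real"
    and mu1 mu2 m rho gamma :: real
    and tau zeta eps :: "nat \<Rightarrow> real"
    and Wc Wh :: "nat \<Rightarrow> nat \<Rightarrow> 'a"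
    and lam :: "nat \<Rightarrow> nat \<times> nat \<Rightarrow> 'a"
  assumes edges: "edge_set N E"
    and grad: "\<And>i z. i < N \<Longrightarrow> GDERIV (f i) z :> G i z"
    and cvx: "\<And>i. i < N \<Longrightarrow> convex_on UNIV (f i)"
    and lip: "\<And>i. i < N \<Longrightarrow> lipschitz_on (C i) UNIV (G i)"
    and mu1: "mu1 \<ge> 0"
    and m: "0 < m" "m \<le> mu2"
    and rho: "rho > 0"
    and gamma: "gamma > 0"
    and eps: "\<And>i. i < N \<Longrightarrow> 0 < eps i"
    and tau_bound: "\<And>i. i < N \<Longrightarrow> tau i > rho * (1 / eps i - 1) * real (deg E i)"
    and zeta_bound: "\<And>i. i < N \<Longrightarrow> zeta i > C i / m * (C i + m)"
    and eps_sum: "(\<Sum>i<N. eps i) < 2 - gamma"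
    and step_i: "\<And>k i w. i < N \<Longrightarrow>
        Lrho N E f mu1 mu2 rho ((Wc k)(i := Wc (Suc k) i)) (Wh k) (lam k)
          + tau i / 2 * (norm (Wc (Suc k) i - Wc k i))\<^sup>2
        \<le> Lrho N E f mu1 mu2 rho ((Wc k)(i := w)) (Wh k) (lam k)
          + tau i / 2 * (norm (w - Wc k i))\<^sup>2"
    and step_ii: "\<And>k e. e \<in> E \<Longrightarrow>
        lam (Suc k) e = lam k e - (gamma * rho) *\<^sub>R Aw (Wc (Suc k)) e"
    and step_iii: "\<And>k i w. i < N \<Longrightarrow>
        Fi f mu1 mu2 i (Wc (Suc k) i, Wh (Suc k) i) + zeta i / 2 * (norm (Wh (Suc k) i - Wh k i))\<^sup>2
        \<le> Fi f mu1 mu2 i (Wc (Suc k) i, w) + zeta i / 2 * (norm (w - Wh k i))\<^sup>2"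
begin

definition consensus_weight :: "nat \<Rightarrow> real" where
  "consensus_weight i = tau i + rho * real (deg E i)"

definition local_coeff :: "nat \<Rightarrow> real" where
  "local_coeff i = zeta i / 2 - (C i)\<^sup>2 / (4 * m) - C i / 4"

definition consensus_coeff :: "nat \<Rightarrow> real" where
  "consensus_coeff i = (consensus_weight i - rho * real (deg E i) / eps i) / 2"

definition residual_coeff :: real where
  "residual_coeff = rho / 2 * (2 - gamma - (\<Sum>i<N. eps i))"

definition lyapunov :: "nat \<Rightarrow> (nat \<Rightarrow> 'a) \<Rightarrow> (nat \<Rightarrow> 'a) \<Rightarrow> (nat \<times> nat \<Rightarrow> 'a) \<Rightarrow> real" where
  "lyapunov k xs ys ls =
     (\<Sum>i<N. consensus_weight i / 2 * (norm (Wc k i - xs i))\<^sup>2)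
     + (\<Sum>i<N. zeta i / 2 * (norm (Wh k i - ys i))\<^sup>2)
     + (\<Sum>e\<in>E. (norm (lam k e - ls e))\<^sup>2) / (2 * gamma * rho)"

definition dissipation :: "nat \<Rightarrow> real" where
  "dissipation k =
     (\<Sum>i<N. local_coeff i * (norm (Wh (Suc k) i - Wh k i))\<^sup>2)
     + (\<Sum>i<N. consensus_coeff i * (norm (Wc (Suc k) i - Wc k i))\<^sup>2)
     + residual_coeff * (\<Sum>e\<in>E. (norm (Aw (Wc (Suc k)) e))\<^sup>2)"

lemma consensus_weight_gt:
  assumes "i < N"
  shows "consensus_weight i > rho * real (deg E i) / eps i"
proof -
  have "rho * (1 / eps i - 1) * real (deg E i) = rho * real (deg E i) / eps i - rho * real (deg E i)"
    using eps[OF assms] by (simp add: field_simps)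
  then show ?thesis
    using tau_bound[OF assms] unfolding consensus_weight_def by linarith
qed

lemma consensus_weight_pos: "i < N \<Longrightarrow> consensus_weight i > 0"
proof -
  assume i: "i < N"
  have "0 \<le> rho * real (deg E i) / eps i"
    using rho eps[OF i] by simp
  then show ?thesis
    using consensus_weight_gt[OF i] by linarith
qed

lemma consensus_coeff_pos: "i < N \<Longrightarrow> consensus_coeff i > 0"
  using consensus_weight_gt[of i] by (simp add: consensus_coeff_def)

lemma zeta_mult_m_gt: "i < N \<Longrightarrow> zeta i * m > C i * (C i + m)"
  using mult_strict_right_mono[OF zeta_bound m(1), of i] m by simp

lemma zeta_pos: "i < N \<Longrightarrow> zeta i > 0"
proof -
  assume i: "i < N"
  have "0 \<le> C i * (C i + m)"
    using lipschitz_on_nonneg[OF lip[OF i]] m by simp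
  then have "0 < zeta i * m"
    using zeta_mult_m_gt[OF i] by linarith
  then show ?thesis
    using m(1) by (rule zero_less_mult_pos2)
qed

lemma local_coeff_pos: "i < N \<Longrightarrow> local_coeff i > 0"
proof -
  assume i: "i < N"
  have "local_coeff i = (zeta i * m + (zeta i * m - C i * (C i + m))) / (4 * m)"
    using m unfolding local_coeff_def by (simp add: field_simps power2_eq_square)
  also have "\<dots> > 0"
    using zeta_mult_m_gt[OF i] mult_pos_pos[OF zeta_pos[OF i] m(1)] m by (intro divide_pos_pos; linarith)
  finally show ?thesis .
qed

lemma residual_coeff_pos: "residual_coeff > 0"
  using rho eps_sum by (simp add: residual_coeff_def)

lemma KKT_iff_gradient_equations:
  "KKT N E f mu1 mu2 xs ys ls \<longleftrightarrow> (\<forall>e\<in>E. Aw xs e = 0) \<and>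
    (\<forall>i<N. fst (G i (xs i, ys i)) + mu1 *\<^sub>R xs i = ATlam E ls i \<and>
           snd (G i (xs i, ys i)) + mu2 *\<^sub>R ys i = 0)"
  by (rule KKT_iff) (rule grad)

lemma consensus_step:
  assumes "i < N"
  shows "fst (G i (Wc (Suc k) i, Wh k i)) + mu1 *\<^sub>R Wc (Suc k) i
      + consensus_weight i *\<^sub>R (Wc (Suc k) i - Wc k i)
    = ATlam E (lam k) i - rho *\<^sub>R ATlam E (Aw (Wc k)) i"
  unfolding consensus_weight_def
  by (rule consensus_step_optimality[OF edges assms grad[OF assms] step_i[OF assms]])

lemma local_step:
  assumes "i < N"
  shows "snd (G i (Wc (Suc k) i, Wh (Suc k) i)) + mu2 *\<^sub>R Wh (Suc k) i
      + zeta i *\<^sub>R (Wh (Suc k) i - Wh k i) = 0"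
  by (rule local_step_optimality[OF grad[OF assms] step_iii[OF assms]])

lemma node_inequality:
  assumes kkt: "KKT N E f mu1 mu2 xs ys ls" and i: "i < N"
  shows "zeta i / 2 * ((norm (Wh (Suc k) i - ys i))\<^sup>2 - (norm (Wh k i - ys i))\<^sup>2)
      + local_coeff i * (norm (Wh (Suc k) i - Wh k i))\<^sup>2
      + consensus_weight i / 2 * ((norm (Wc (Suc k) i - xs i))\<^sup>2 - (norm (Wc k i - xs i))\<^sup>2
                                  + (norm (Wc (Suc k) i - Wc k i))\<^sup>2)
    \<le> inner (ATlam E (lam k) i - ATlam E ls i - rho *\<^sub>R ATlam E (Aw (Wc k)) i) (Wc (Suc k) i - xs i)"
    (is "?local + ?consensus \<le> inner ?R ?X")
proof -
  define u where "u = Wc (Suc k) i - Wc k i"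
  define a where "a = fst (G i (Wc (Suc k) i, Wh k i)) - fst (G i (xs i, ys i))"
  have kkt_i: "fst (G i (xs i, ys i)) + mu1 *\<^sub>R xs i = ATlam E ls i"
    "snd (G i (xs i, ys i)) + mu2 *\<^sub>R ys i = 0"
    using kkt i by (simp_all add: KKT_iff_gradient_equations)
  have "?local \<le> inner a ?X"
    using consensus_gradient_inner_lower_bound[OF cvx[OF i] grad[OF i] lip[OF i] m local_step[OF i] kkt_i(2)]
    unfolding local_coeff_def a_def .
  moreover have "a + mu1 *\<^sub>R ?X + consensus_weight i *\<^sub>R u = ?R"
  proof -
    have "a + mu1 *\<^sub>R ?X + consensus_weight i *\<^sub>R u
        = (fst (G i (Wc (Suc k) i, Wh k i)) + mu1 *\<^sub>R Wc (Suc k) i + consensus_weight i *\<^sub>R u)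
          - (fst (G i (xs i, ys i)) + mu1 *\<^sub>R xs i)"
      unfolding a_def by (simp add: algebra_simps)
    also have "\<dots> = ?R"
      unfolding u_def consensus_step[OF i] kkt_i(1) by (simp add: algebra_simps)
    finally show ?thesis .
  qed
  from arg_cong[OF this, of "\<lambda>v. inner v ?X"]
  have "inner a ?X + mu1 * (norm ?X)\<^sup>2 + consensus_weight i * inner u ?X = inner ?R ?X"
    by (simp add: inner_add_left power2_norm_eq_inner)
  moreover have "consensus_weight i * inner u ?X = ?consensus"
  proof -
    have "2 * inner u ?X
        = (norm (Wc (Suc k) i - xs i))\<^sup>2 - (norm (Wc k i - xs i))\<^sup>2 + (norm (Wc (Suc k) i - Wc k i))\<^sup>2"
      unfolding u_def by (simp add: power2_norm_eq_inner inner_diff_left inner_diff_right inner_commute)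
    from arg_cong[OF this, of "\<lambda>t. consensus_weight i / 2 * t"] show ?thesis
      by (simp add: algebra_simps)
  qed
  moreover have "0 \<le> mu1 * (norm ?X)\<^sup>2"
    using mu1 by simp
  ultimately show ?thesis
    by linarith
qed

lemma sum_node_inequality:
  assumes kkt: "KKT N E f mu1 mu2 xs ys ls"
  shows "(\<Sum>i<N. zeta i / 2 * (norm (Wh (Suc k) i - ys i))\<^sup>2)
      - (\<Sum>i<N. zeta i / 2 * (norm (Wh k i - ys i))\<^sup>2)
      + (\<Sum>i<N. local_coeff i * (norm (Wh (Suc k) i - Wh k i))\<^sup>2)
      + (\<Sum>i<N. consensus_weight i / 2 * (norm (Wc (Suc k) i - xs i))\<^sup>2)
      - (\<Sum>i<N. consensus_weight i / 2 * (norm (Wc k i - xs i))\<^sup>2)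
      + (\<Sum>i<N. consensus_weight i / 2 * (norm (Wc (Suc k) i - Wc k i))\<^sup>2)
    \<le> (\<Sum>e\<in>E. inner (lam k e - ls e) (Aw (Wc (Suc k)) e))
      - rho * (\<Sum>e\<in>E. (norm (Aw (Wc (Suc k)) e))\<^sup>2)
      + rho * (\<Sum>e\<in>E. inner (Aw (\<lambda>i. Wc (Suc k) i - Wc k i) e) (Aw (Wc (Suc k)) e))"
proof -
  let ?X = "\<lambda>i. Wc (Suc k) i - xs i"
  have "Aw ?X e = Aw (Wc (Suc k)) e" if "e \<in> E" for e
    using kkt that by (simp add: Aw_diff KKT_iff_gradient_equations)
  then have adjoint: "(\<Sum>i<N. inner (ATlam E \<mu> i) (?X i)) = (\<Sum>e\<in>E. inner (\<mu> e) (Aw (Wc (Suc k)) e))"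
    for \<mu>
    unfolding sum_inner_ATlam[OF edges] by (intro sum.cong) auto
  have "(\<Sum>i<N. zeta i / 2 * (norm (Wh (Suc k) i - ys i))\<^sup>2)
      - (\<Sum>i<N. zeta i / 2 * (norm (Wh k i - ys i))\<^sup>2)
      + (\<Sum>i<N. local_coeff i * (norm (Wh (Suc k) i - Wh k i))\<^sup>2)
      + (\<Sum>i<N. consensus_weight i / 2 * (norm (Wc (Suc k) i - xs i))\<^sup>2)
      - (\<Sum>i<N. consensus_weight i / 2 * (norm (Wc k i - xs i))\<^sup>2)
      + (\<Sum>i<N. consensus_weight i / 2 * (norm (Wc (Suc k) i - Wc k i))\<^sup>2)
    = (\<Sum>i<N. zeta i / 2 * ((norm (Wh (Suc k) i - ys i))\<^sup>2 - (norm (Wh k i - ys i))\<^sup>2)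
         + local_coeff i * (norm (Wh (Suc k) i - Wh k i))\<^sup>2
         + consensus_weight i / 2 * ((norm (Wc (Suc k) i - xs i))\<^sup>2 - (norm (Wc k i - xs i))\<^sup>2
                                     + (norm (Wc (Suc k) i - Wc k i))\<^sup>2))"
    by (simp add: sum.distrib sum_subtractf distrib_left right_diff_distrib)
  also have "\<dots> \<le> (\<Sum>i<N. inner (ATlam E (lam k) i - ATlam E ls i - rho *\<^sub>R ATlam E (Aw (Wc k)) i)
                            (?X i))"
    by (intro sum_mono node_inequality[OF kkt]) simp
  also have "\<dots> = (\<Sum>i<N. inner (ATlam E (lam k) i) (?X i)) - (\<Sum>i<N. inner (ATlam E ls i) (?X i))
      - rho * (\<Sum>i<N. inner (ATlam E (Aw (Wc k)) i) (?X i))"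
    by (simp add: inner_diff_left sum_subtractf sum_distrib_left)
  also have "\<dots> = (\<Sum>e\<in>E. inner (lam k e - ls e) (Aw (Wc (Suc k)) e))
      - rho * (\<Sum>e\<in>E. inner (Aw (Wc (Suc k)) e - Aw (\<lambda>i. Wc (Suc k) i - Wc k i) e)
                                (Aw (Wc (Suc k)) e))"
    unfolding adjoint by (simp add: inner_diff_left sum_subtractf Aw_diff)
  finally show ?thesis
    by (simp add: inner_diff_left sum_subtractf power2_norm_eq_inner algebra_simps)
qed

lemma dual_update_scaled_sq_dist:
  "(\<Sum>e\<in>E. (norm (lam (Suc k) e - ls e))\<^sup>2) / (2 * gamma * rho)
    = (\<Sum>e\<in>E. (norm (lam k e - ls e))\<^sup>2) / (2 * gamma * rho)
      - (\<Sum>e\<in>E. inner (lam k e - ls e) (Aw (Wc (Suc k)) e))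
      + gamma * rho / 2 * (\<Sum>e\<in>E. (norm (Aw (Wc (Suc k)) e))\<^sup>2)"
proof -
  have "(norm (lam (Suc k) e - ls e))\<^sup>2
      = (norm (lam k e - ls e))\<^sup>2 - 2 * (gamma * rho) * inner (lam k e - ls e) (Aw (Wc (Suc k)) e)
        + (gamma * rho)\<^sup>2 * (norm (Aw (Wc (Suc k)) e))\<^sup>2" if "e \<in> E" for e
    using norm_add_scaleR_sq[of "lam k e - ls e" "- (gamma * rho)" "Aw (Wc (Suc k)) e"]
    unfolding step_ii[OF that] by (simp add: algebra_simps)
  then have "(\<Sum>e\<in>E. (norm (lam (Suc k) e - ls e))\<^sup>2)
      = (\<Sum>e\<in>E. (norm (lam k e - ls e))\<^sup>2)
        - 2 * (gamma * rho) * (\<Sum>e\<in>E. inner (lam k e - ls e) (Aw (Wc (Suc k)) e))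
        + (gamma * rho)\<^sup>2 * (\<Sum>e\<in>E. (norm (Aw (Wc (Suc k)) e))\<^sup>2)"
    by (simp add: sum.distrib sum_subtractf sum_distrib_left)
  then show ?thesis
    using gamma rho by (simp add: field_simps power2_eq_square)
qed

lemma lyapunov_descent:
  assumes kkt: "KKT N E f mu1 mu2 xs ys ls"
  shows "lyapunov (Suc k) xs ys ls + dissipation k \<le> lyapunov k xs ys ls"
proof -
  let ?u = "\<lambda>i. Wc (Suc k) i - Wc k i" and ?r = "\<lambda>e. Aw (Wc (Suc k)) e"
  have "(\<Sum>e\<in>E. inner (Aw ?u e) (?r e))
      \<le> (\<Sum>i<N. real (deg E i) / (2 * eps i) * (norm (?u i))\<^sup>2)
        + (\<Sum>i<N. eps i) / 2 * (\<Sum>e\<in>E. (norm (?r e))\<^sup>2)"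
    by (rule sum_inner_Aw_le[OF edges eps])
  from mult_left_mono[OF this less_imp_le[OF rho]]
  have Young: "rho * (\<Sum>e\<in>E. inner (Aw ?u e) (?r e))
      \<le> rho * (\<Sum>i<N. real (deg E i) / (2 * eps i) * (norm (?u i))\<^sup>2)
        + rho * (\<Sum>i<N. eps i) / 2 * (\<Sum>e\<in>E. (norm (?r e))\<^sup>2)"
    by (simp add: algebra_simps)
  have "(\<Sum>i<N. consensus_coeff i * (norm (?u i))\<^sup>2)
      = (\<Sum>i<N. consensus_weight i / 2 * (norm (?u i))\<^sup>2)
        - rho * (\<Sum>i<N. real (deg E i) / (2 * eps i) * (norm (?u i))\<^sup>2)"
    unfolding sum_distrib_left sum_subtractf[symmetric]
    by (rule sum.cong) (simp_all add: consensus_coeff_def field_simps)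
  moreover have "residual_coeff * (\<Sum>e\<in>E. (norm (?r e))\<^sup>2)
      = rho * (\<Sum>e\<in>E. (norm (?r e))\<^sup>2) - gamma * rho / 2 * (\<Sum>e\<in>E. (norm (?r e))\<^sup>2)
        - rho * (\<Sum>i<N. eps i) / 2 * (\<Sum>e\<in>E. (norm (?r e))\<^sup>2)"
    unfolding residual_coeff_def by (simp add: field_simps)
  ultimately show ?thesis
    unfolding lyapunov_def dissipation_def
    using sum_node_inequality[OF kkt, of k] Young dual_update_scaled_sq_dist[of k ls] by linarith
qed

lemma lyapunov_nonneg: "0 \<le> lyapunov k xs ys ls"
  unfolding lyapunov_def using gamma rho
  by (intro add_nonneg_nonneg sum_nonneg divide_nonneg_pos mult_nonneg_nonneg)
    (auto simp: less_imp_le consensus_weight_pos zeta_pos)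

lemma dissipation_ge:
  shows "i < N \<Longrightarrow> local_coeff i * (norm (Wh (Suc k) i - Wh k i))\<^sup>2 \<le> dissipation k"
    and "i < N \<Longrightarrow> consensus_coeff i * (norm (Wc (Suc k) i - Wc k i))\<^sup>2 \<le> dissipation k"
    and "e \<in> E \<Longrightarrow> residual_coeff * (norm (Aw (Wc (Suc k)) e))\<^sup>2 \<le> dissipation k"
    and "0 \<le> dissipation k"
proof -
  define S1 where "S1 = (\<Sum>i<N. local_coeff i * (norm (Wh (Suc k) i - Wh k i))\<^sup>2)"
  define S2 where "S2 = (\<Sum>i<N. consensus_coeff i * (norm (Wc (Suc k) i - Wc k i))\<^sup>2)"
  define S3 where "S3 = (\<Sum>e\<in>E. (norm (Aw (Wc (Suc k)) e))\<^sup>2)"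
  have D: "dissipation k = S1 + S2 + residual_coeff * S3"
    unfolding dissipation_def S1_def S2_def S3_def ..
  have S1: "local_coeff i * (norm (Wh (Suc k) i - Wh k i))\<^sup>2 \<le> S1" if "i < N" for i
    unfolding S1_def using that by (intro member_le_sum) (auto simp: less_imp_le local_coeff_pos)
  have S2: "consensus_coeff i * (norm (Wc (Suc k) i - Wc k i))\<^sup>2 \<le> S2" if "i < N" for i
    unfolding S2_def using that by (intro member_le_sum) (auto simp: less_imp_le consensus_coeff_pos)
  have S3: "(norm (Aw (Wc (Suc k)) e))\<^sup>2 \<le> S3" if "e \<in> E" for e
    unfolding S3_def using that edge_set_finite[OF edges] by (intro member_le_sum) auto
  have nonneg: "0 \<le> S1" "0 \<le> S2" "0 \<le> residual_coeff * S3"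
    unfolding S1_def S2_def S3_def using local_coeff_pos consensus_coeff_pos residual_coeff_pos
    by (auto intro!: sum_nonneg mult_nonneg_nonneg simp: less_imp_le)
  show "local_coeff i * (norm (Wh (Suc k) i - Wh k i))\<^sup>2 \<le> dissipation k" if "i < N" for i
    using S1[OF that] nonneg unfolding D by linarith
  show "consensus_coeff i * (norm (Wc (Suc k) i - Wc k i))\<^sup>2 \<le> dissipation k" if "i < N" for i
    using S2[OF that] nonneg unfolding D by linarith
  show "residual_coeff * (norm (Aw (Wc (Suc k)) e))\<^sup>2 \<le> dissipation k" if "e \<in> E" for e
    using mult_left_mono[OF S3[OF that] less_imp_le[OF residual_coeff_pos]] nonneg unfolding D
    by linarith
  show "0 \<le> dissipation k"
    using nonneg unfolding D by simp
qed

lemma dissipation_tendsto_0: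
  assumes "KKT N E f mu1 mu2 xs ys ls"
  shows "dissipation \<longlonglongrightarrow> 0"
  using summable_of_telescoping[of "\<lambda>k. lyapunov k xs ys ls" dissipation,
      OF lyapunov_descent[OF assms] lyapunov_nonneg dissipation_ge(4)]
  by (rule summable_LIMSEQ_zero)

lemma increments_tendsto_0:
  assumes "KKT N E f mu1 mu2 xs ys ls"
  shows "i < N \<Longrightarrow> (\<lambda>k. Wh (Suc k) i - Wh k i) \<longlonglongrightarrow> 0"
    and "i < N \<Longrightarrow> (\<lambda>k. Wc (Suc k) i - Wc k i) \<longlonglongrightarrow> 0"
    and "e \<in> E \<Longrightarrow> (\<lambda>k. Aw (Wc k) e) \<longlonglongrightarrow> 0"
proof -
  note D = dissipation_tendsto_0[OF assms]
  show "(\<lambda>k. Wh (Suc k) i - Wh k i) \<longlonglongrightarrow> 0" if "i < N" for i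
    by (rule tendsto_of_norm_sq_bound[OF local_coeff_pos[OF that] _ D])
      (simp add: dissipation_ge(1)[OF that])
  show "(\<lambda>k. Wc (Suc k) i - Wc k i) \<longlonglongrightarrow> 0" if "i < N" for i
    by (rule tendsto_of_norm_sq_bound[OF consensus_coeff_pos[OF that] _ D])
      (simp add: dissipation_ge(2)[OF that])
  have "(\<lambda>k. Aw (Wc (Suc k)) e) \<longlonglongrightarrow> 0" if "e \<in> E" for e
    by (rule tendsto_of_norm_sq_bound[OF residual_coeff_pos _ D])
      (simp add: dissipation_ge(3)[OF that])
  then show "(\<lambda>k. Aw (Wc k) e) \<longlonglongrightarrow> 0" if "e \<in> E" for e
    using that by (blast intro: LIMSEQ_imp_Suc)
qed

lemma limit_point_KKT:
  assumes kkt: "KKT N E f mu1 mu2 x0 y0 l0" and r: "strict_mono r"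
    and lim_c: "\<And>i. i < N \<Longrightarrow> (\<lambda>k. Wc (r k) i) \<longlonglongrightarrow> xs i"
    and lim_h: "\<And>i. i < N \<Longrightarrow> (\<lambda>k. Wh (r k) i) \<longlonglongrightarrow> ys i"
    and lim_l: "\<And>e. e \<in> E \<Longrightarrow> (\<lambda>k. lam (r k) e) \<longlonglongrightarrow> ls e"
  shows "KKT N E f mu1 mu2 xs ys ls"
proof -
  have sub: "(\<lambda>k. X (r k)) \<longlonglongrightarrow> 0" if "X \<longlonglongrightarrow> 0" for X :: "nat \<Rightarrow> 'a"
    using LIMSEQ_subseq_LIMSEQ[OF that r] by (simp add: o_def)
  have lim_c1: "(\<lambda>k. Wc (Suc (r k)) i) \<longlonglongrightarrow> xs i" if "i < N" for i
    using tendsto_add[OF lim_c[OF that] sub[OF increments_tendsto_0(2)[OF kkt that]]] by simp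
  have lim_h1: "(\<lambda>k. Wh (Suc (r k)) i) \<longlonglongrightarrow> ys i" if "i < N" for i
    using tendsto_add[OF lim_h[OF that] sub[OF increments_tendsto_0(1)[OF kkt that]]] by simp
  have G_lim: "(\<lambda>k. G i (a k, b k)) \<longlonglongrightarrow> G i (x, y)"
    if "i < N" "a \<longlonglongrightarrow> x" "b \<longlonglongrightarrow> y" for i a b x y
    by (rule tendsto_lipschitz_Pair[OF lip[OF that(1)] that(2,3)])
  have "Aw xs e = 0" if e: "e \<in> E" for e
  proof (rule LIMSEQ_unique)
    show "(\<lambda>k. Aw (Wc (r k)) e) \<longlonglongrightarrow> Aw xs e"
      using edge_set_memD[OF edges e] unfolding Aw_def by (intro tendsto_diff lim_c) auto
    show "(\<lambda>k. Aw (Wc (r k)) e) \<longlonglongrightarrow> 0"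
      by (rule sub[OF increments_tendsto_0(3)[OF kkt e]])
  qed
  moreover have "fst (G i (xs i, ys i)) + mu1 *\<^sub>R xs i = ATlam E ls i" if i: "i < N" for i
  proof -
    let ?s = "\<lambda>k. ATlam E (lam (r k)) i - rho *\<^sub>R ATlam E (Aw (Wc (r k))) i"
    have "?s \<longlonglongrightarrow> fst (G i (xs i, ys i)) + mu1 *\<^sub>R xs i + consensus_weight i *\<^sub>R 0"
      unfolding consensus_step[OF i, symmetric]
      by (intro tendsto_add tendsto_fst G_lim i lim_c1 lim_h tendsto_scaleR tendsto_const
          sub increments_tendsto_0(2)[OF kkt i])
    moreover have "?s \<longlonglongrightarrow> ATlam E ls i - rho *\<^sub>R ATlam E (\<lambda>e. 0) i"
      by (intro tendsto_diff tendsto_scaleR tendsto_const tendsto_ATlam lim_l sub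
          increments_tendsto_0(3)[OF kkt])
    ultimately show ?thesis
      using LIMSEQ_unique by (fastforce simp: ATlam_def)
  qed
  moreover have "snd (G i (xs i, ys i)) + mu2 *\<^sub>R ys i = 0" if i: "i < N" for i
  proof -
    let ?s = "\<lambda>k. snd (G i (Wc (Suc (r k)) i, Wh (Suc (r k)) i)) + mu2 *\<^sub>R Wh (Suc (r k)) i
                 + zeta i *\<^sub>R (Wh (Suc (r k)) i - Wh (r k) i)"
    have "?s \<longlonglongrightarrow> snd (G i (xs i, ys i)) + mu2 *\<^sub>R ys i + zeta i *\<^sub>R 0"
      by (intro tendsto_add tendsto_snd G_lim i lim_c1 lim_h1 tendsto_scaleR tendsto_const
          sub increments_tendsto_0(1)[OF kkt i])
    then show ?thesis
      unfolding local_step[OF i] by (simp add: LIMSEQ_const_iff)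
  qed
  ultimately show ?thesis
    by (simp add: KKT_iff_gradient_equations)
qed

definition iterate :: "nat \<Rightarrow> nat + nat + nat \<times> nat \<Rightarrow> 'a" where
  "iterate k = case_sum (Wc k) (case_sum (Wh k) (lam k))"

definition lyapunov_weight :: "nat + nat + nat \<times> nat \<Rightarrow> real" where
  "lyapunov_weight =
     case_sum (\<lambda>i. consensus_weight i / 2) (case_sum (\<lambda>i. zeta i / 2) (\<lambda>e. 1 / (2 * gamma * rho)))"

lemma lyapunov_eq_weighted_sq_dist:
  "lyapunov k (x \<circ> Inl) (x \<circ> Inr \<circ> Inl) (x \<circ> Inr \<circ> Inr)
    = weighted_sq_dist ({..<N} <+> {..<N} <+> E) lyapunov_weight (iterate k) x"
  using edge_set_finite[OF edges]
  by (simp add: lyapunov_def weighted_sq_dist_def lyapunov_weight_def iterate_def sum.Plus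
      sum_divide_distrib)

lemma tendsto_iterate_iff:
  "(\<forall>j\<in>{..<N} <+> {..<N} <+> E. (\<lambda>k. iterate (r k) j) \<longlonglongrightarrow> x j) \<longleftrightarrow>
     (\<forall>i<N. (\<lambda>k. Wc (r k) i) \<longlonglongrightarrow> x (Inl i)) \<and> (\<forall>i<N. (\<lambda>k. Wh (r k) i) \<longlonglongrightarrow> x (Inr (Inl i))) \<and>
     (\<forall>e\<in>E. (\<lambda>k. lam (r k) e) \<longlonglongrightarrow> x (Inr (Inr e)))"
  by (simp add: iterate_def Plus_def ball_Un, simp add: Ball_def)

theorem converges_to_KKT:
  assumes "\<exists>xs ys ls. KKT N E f mu1 mu2 xs ys ls"
  shows "\<exists>Wcs Whs lams. KKT N E f mu1 mu2 Wcs Whs lams \<and>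
           (\<forall>i<N. (\<lambda>k. Wc k i) \<longlonglongrightarrow> Wcs i) \<and>
           (\<forall>i<N. (\<lambda>k. Wh k i) \<longlonglongrightarrow> Whs i) \<and>
           (\<forall>e\<in>E. (\<lambda>k. lam k e) \<longlonglongrightarrow> lams e)"
proof -
  obtain xs ys ls where kkt: "KKT N E f mu1 mu2 xs ys ls"
    using assms by blast
  let ?J = "{..<N} <+> {..<N} <+> E"
  define S where "S = {x. KKT N E f mu1 mu2 (x \<circ> Inl) (x \<circ> Inr \<circ> Inl) (x \<circ> Inr \<circ> Inr)}"
  have "\<exists>x\<in>S. \<forall>j\<in>?J. (\<lambda>k. iterate k j) \<longlonglongrightarrow> x j"
  proof (rule fejer_monotone_convergent)
    show "finite ?J"
      using edge_set_finite[OF edges] by simp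
    show "0 < lyapunov_weight j" if "j \<in> ?J" for j
      using that consensus_weight_pos zeta_pos gamma rho by (auto simp: lyapunov_weight_def)
    show "case_sum xs (case_sum ys ls) \<in> S"
      using kkt by (simp add: S_def o_def)
    show "weighted_sq_dist ?J lyapunov_weight (iterate (Suc k)) x
        \<le> weighted_sq_dist ?J lyapunov_weight (iterate k) x" if "x \<in> S" for x k
      using lyapunov_descent[of "x \<circ> Inl" "x \<circ> Inr \<circ> Inl" "x \<circ> Inr \<circ> Inr" k] dissipation_ge(4)[of k] that
      unfolding S_def lyapunov_eq_weighted_sq_dist by simp
    show "x \<in> S" if "strict_mono r" and "\<forall>j\<in>?J. (\<lambda>k. iterate (r k) j) \<longlonglongrightarrow> x j" for r x
      using that(2) unfolding S_def tendsto_iterate_iff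
      by (intro CollectI limit_point_KKT[OF kkt that(1)]) auto
  qed
  then obtain x where "x \<in> S" and "\<forall>j\<in>?J. (\<lambda>k. iterate (id k) j) \<longlonglongrightarrow> x j"
    by auto
  then show ?thesis
    unfolding S_def tendsto_iterate_iff
    by (intro exI[of _ "x \<circ> Inl"] exI[of _ "x \<circ> Inr \<circ> Inl"] exI[of _ "x \<circ> Inr \<circ> Inr"]) auto
qed

end

theorem theorem1:
  fixes N :: nat and E :: "(nat \<times> nat) set"
    and f :: "nat \<Rightarrow> 'a::euclidean_space \<times> 'a \<Rightarrow> real"
    and G :: "nat \<Rightarrow> 'a \<times> 'a \<Rightarrow> 'a \<times> 'a"
    and C :: "nat \<Rightarrow> real"
    and mu1 mu2 m rho gamma :: real
    and tau zeta eps :: "nat \<Rightarrow> real"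
    and Wc Wh :: "nat \<Rightarrow> nat \<Rightarrow> 'a"
    and lam :: "nat \<Rightarrow> nat \<times> nat \<Rightarrow> 'a"
  assumes N2: "N \<ge> 2"
    and edges: "edge_set N E"
    and conn: "connected_graph N E"
    and grad: "\<And>i z. i < N \<Longrightarrow> GDERIV (f i) z :> G i z"
    and cvx: "\<And>i. i < N \<Longrightarrow> convex_on UNIV (f i)"
    and lip: "\<And>i. i < N \<Longrightarrow> lipschitz_on (C i) UNIV (G i)"
    and mu1: "mu1 \<ge> 0" and mu2: "mu2 > 0"
    and m: "0 < m" "m \<le> mu2"
    and tau: "\<And>i. i < N \<Longrightarrow> tau i > 0"
    and zeta: "\<And>i. i < N \<Longrightarrow> zeta i > 0"
    and rho: "rho > 0"
    and kkt_ex: "\<exists>Wc' Wh' lam'. KKT N E f mu1 mu2 Wc' Wh' lam'"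
    and gamma: "0 < gamma" "gamma < 2"
    and eps: "\<And>i. i < N \<Longrightarrow> 0 < eps i \<and> eps i < 1"
    and tau_bound: "\<And>i. i < N \<Longrightarrow> tau i > rho * (1 / eps i - 1) * real (deg E i)"
    and zeta_bound: "\<And>i. i < N \<Longrightarrow> zeta i > C i / m * (C i + m)"
    and eps_sum: "(\<Sum>i<N. eps i) < 2 - gamma"
    and step_i: "\<And>k i w. i < N \<Longrightarrow>
        Lrho N E f mu1 mu2 rho ((Wc k)(i := Wc (Suc k) i)) (Wh k) (lam k)
          + tau i / 2 * (norm (Wc (Suc k) i - Wc k i))\<^sup>2
        \<le> Lrho N E f mu1 mu2 rho ((Wc k)(i := w)) (Wh k) (lam k)
          + tau i / 2 * (norm (w - Wc k i))\<^sup>2"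
    and step_ii: "\<And>k e. e \<in> E \<Longrightarrow>
        lam (Suc k) e = lam k e - (gamma * rho) *\<^sub>R Aw (Wc (Suc k)) e"
    and step_iii: "\<And>k i w. i < N \<Longrightarrow>
        Fi f mu1 mu2 i (Wc (Suc k) i, Wh (Suc k) i) + zeta i / 2 * (norm (Wh (Suc k) i - Wh k i))\<^sup>2
        \<le> Fi f mu1 mu2 i (Wc (Suc k) i, w) + zeta i / 2 * (norm (w - Wh k i))\<^sup>2"
  shows "\<exists>Wcs Whs lams. KKT N E f mu1 mu2 Wcs Whs lams \<and>
           (\<forall>i<N. (\<lambda>k. Wc k i) \<longlonglongrightarrow> Wcs i) \<and>
           (\<forall>i<N. (\<lambda>k. Wh k i) \<longlonglongrightarrow> Whs i) \<and>
           (\<forall>e\<in>E. (\<lambda>k. lam k e) \<longlonglongrightarrow> lams e)"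
proof -
  interpret admm N E f G C mu1 mu2 m rho gamma tau zeta eps Wc Wh lam
    by unfold_locales (use assms in simp_all)
  show ?thesis
    using kkt_ex by (rule converges_to_KKT)
qed

end
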